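(* Let $f(n)$ be the number of permutations of $[n]$ with all valleys even and all peaks odd ($f(0)=1$). Then \[ \sum_{n\ge0} f(n)\frac{x^n}{n!}=\left[\sum_{n=0}^{\infty}\left(E_{3n}\frac{x^{3n}}{(3n)!}-E_{3n+1}\frac{x^{3n+1}}{(3n+1)!}\right)\right]^{-1}=\Bigl(1-E_1x+E_3\tfrac{x^3}{3!}-E_4\tfrac{x^4}{4!}+E_6\tfrac{x^6}{6!}-\cdots\Bigr)^{-1}, \] and this also equals $\dfrac{3\sin(\frac12x)+3\cosh(\frac12\sqrt3x)}{3\cos(\frac12x)-\sqrt3\sinh(\frac12\sqrt3x)}$.
   Context: The Euler numbers $E_n$ are defined by $\sum_{n\ge0}E_nx^n/n!=\sec x+\tan x$. For a permutation $\pi_1\cdots\pi_n$, index $i\in\{2,\dots,n-1\}$ is a peak if $\pi_{i-1}<\pi_i>\pi_{i+1}$ and a valley if $\pi_{i-1}>\pi_i<\pi_{i+1}$. *)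

theory Defs
  imports "HOL-Analysis.Analysis" "HOL-Computational_Algebra.Formal_Power_Series"
begin

definition euler_number :: "nat \<Rightarrow> real" where
  "euler_number n = fact n * fps_nth (inverse (fps_cos 1) + fps_tan 1) n"

text \<open>Permutations of [n] = {1..n} in one-line notation \<pi>_1 ... \<pi>_n, stored as a list
  (list position k holds \<pi>_(k+1)).\<close>
definition perms_of :: "nat \<Rightarrow> nat list set" where
  "perms_of n = {xs. distinct xs \<and> set xs = {1..n}}"

text \<open>Index i (1-based, 2 \<le> i \<le> n-1) is a peak / valley of \<pi>_1...\<pi>_n.\<close>
definition is_peak :: "nat list \<Rightarrow> nat \<Rightarrow> bool" where
  "is_peak xs i \<longleftrightarrow> 2 \<le> i \<and> i + 1 \<le> length xs \<and>
     xs ! (i - 2) < xs ! (i - 1) \<and> xs ! (i - 1) > xs ! i"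

definition is_valley :: "nat list \<Rightarrow> nat \<Rightarrow> bool" where
  "is_valley xs i \<longleftrightarrow> 2 \<le> i \<and> i + 1 \<le> length xs \<and>
     xs ! (i - 2) > xs ! (i - 1) \<and> xs ! (i - 1) < xs ! i"

definition f_count :: "nat \<Rightarrow> nat" where
  "f_count n = card {xs \<in> perms_of n. (\<forall>i. is_valley xs i \<longrightarrow> even i) \<and>
                                      (\<forall>i. is_peak xs i \<longrightarrow> odd i)}"

end

theory Submission
  imports Defs
begin

(* Combinatorics: write a permutation of [n+1] as alpha (n+1) beta. The parity condition splits into
   conditions on alpha and on beta (shifted by |alpha| + 1). With e(n) the number of good permutations
   of [n] whose last step is an ascent for odd n and a descent for even n, standardizing the two parts
   gives the recurrences (f_count_rec, e_count_rec)
     f(n+1) = sum_{j even} C(n,j) f(j) f(n-j) + [n odd] e(n),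
     e(n+1) = sum_{j even} C(n,j) f(j) e(n-j) + [n even] f(n).
   Analysis: for the egfs F, G these read F' = Ev(F) F + Od(G), G' = Ev(F) (G + 1), a causal system
   whose solution is fixed by its constant terms. The closed form F = N/W with
   N = 3 sin(x/2) + 3 cosh(sqrt 3 x/2), W = 3 cos(x/2) - sqrt 3 sinh(sqrt 3 x/2) solves it.
   Finally, for T = sec x + tan x (2T' = 1 + T^2) and a primitive cube root of unity w, the real and
   imaginary parts P, Q of T(w x) solve a Riccati system also solved by 3 cos(x/2)/N and
   3 sinh(sqrt 3 x/2)/N; the series with coefficients E_n/n!, -E_n/n!, 0 (n mod 3 = 0, 1, 2) is
   P - Q/sqrt 3 = W/N, whose inverse is F. *)

unbundle no vec_syntax
notation fps_nth (infixl \<open>$\<close> 75)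

section \<open>Peaks and valleys around an inserted maximum\<close>

text \<open>For \<open>p = 0\<close> this is the property counted by \<open>f_count\<close>; the shift \<open>p\<close> records
  the position at which a block sits inside a longer permutation.\<close>

definition parity_good :: "nat \<Rightarrow> nat list \<Rightarrow> bool" where
  "parity_good p xs \<longleftrightarrow> (\<forall>i. is_valley xs i \<longrightarrow> even (i + p)) \<and> (\<forall>i. is_peak xs i \<longrightarrow> odd (i + p))"

definition ends_desc :: "nat list \<Rightarrow> bool" where
  "ends_desc xs \<longleftrightarrow> 2 \<le> length xs \<and> xs ! (length xs - 2) > xs ! (length xs - 1)"

definition ends_asc :: "nat list \<Rightarrow> bool" where
  "ends_asc xs \<longleftrightarrow> 2 \<le> length xs \<and> xs ! (length xs - 2) < xs ! (length xs - 1)"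

definition starts_asc :: "nat list \<Rightarrow> bool" where
  "starts_asc xs \<longleftrightarrow> 2 \<le> length xs \<and> xs ! 0 < xs ! 1"

lemma parity_good_even: "even p \<Longrightarrow> parity_good p xs = parity_good 0 xs"
  and parity_good_odd: "odd p \<Longrightarrow> parity_good p xs = parity_good 1 xs"
  by (simp_all add: parity_good_def)

lemma parity_good_Nil: "parity_good p []"
  by (simp add: parity_good_def is_peak_def is_valley_def)

lemma ends_asc_iff:
  assumes "distinct xs" "2 \<le> length xs"
  shows "ends_asc xs \<longleftrightarrow> \<not> ends_desc xs"
proof -
  have "xs ! (length xs - 2) \<noteq> xs ! (length xs - 1)"
    using assms by (simp add: nth_eq_iff_index_eq)
  then show ?thesis using assms(2) by (auto simp: ends_asc_def ends_desc_def)
qed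

lemma peak_bounds: "is_peak xs k \<Longrightarrow> 2 \<le> k \<and> k + 1 \<le> length xs"
  and valley_bounds: "is_valley xs k \<Longrightarrow> 2 \<le> k \<and> k + 1 \<le> length xs"
  by (simp_all add: is_peak_def is_valley_def)

lemma nth_insert_max:
  "(\<alpha> @ M # \<beta>) ! t = (if t < length \<alpha> then \<alpha> ! t else if t = length \<alpha> then M else \<beta> ! (t - length \<alpha> - 1))"
  by (auto simp: nth_append nth_Cons' diff_diff_add)

lemma peak_insert_max:
  assumes "\<forall>x\<in>set \<alpha>. x < M" "\<forall>x\<in>set \<beta>. x < M"
  shows "is_peak (\<alpha> @ M # \<beta>) k \<longleftrightarrow>
     (k + 1 \<le> length \<alpha> \<and> is_peak \<alpha> k) \<or> (k = length \<alpha> + 1 \<and> length \<alpha> \<ge> 1 \<and> \<beta> \<noteq> [])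
     \<or> (k \<ge> length \<alpha> + 3 \<and> is_peak \<beta> (k - length \<alpha> - 1))"
proof -
  let ?j = "length \<alpha>"
  have alpha_below: "\<alpha> ! t < M" if "t < ?j" for t using assms(1) that by auto
  have beta_below: "\<beta> ! t < M" if "t < length \<beta>" for t using assms(2) that by auto
  have beta_first_below: "\<beta> ! 0 < M" if "2 \<le> length \<beta>" using that beta_below[of 0] by (cases \<beta>) auto
  consider "k + 1 \<le> ?j" | "k = ?j" | "k = ?j + 1" | "k = ?j + 2" | "k \<ge> ?j + 3" by linarith
  then show ?thesis
  proof cases
    case 1 then show ?thesis by (auto simp: is_peak_def nth_insert_max)
  next
    case 2 then show ?thesis using alpha_below[of "?j - 1"] by (auto simp: is_peak_def nth_insert_max)
  next
    case 3 then show ?thesis using alpha_below[of "?j - 1"] beta_below[of 0] by (auto simp: is_peak_def nth_insert_max Suc_le_eq)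
  next
    case 4 then show ?thesis using beta_first_below by (auto simp: is_peak_def nth_insert_max)
  next
    case 5
    define t where "t = k - ?j - 1"
    have k: "k = ?j + 1 + t" and t2: "t \<ge> 2" using 5 by (auto simp: t_def)
    have shift: "?j + 1 + t - 2 = ?j + 1 + (t - 2)" "?j + 1 + t - 1 = ?j + 1 + (t - 1)" using t2 by auto
    have nth_beta: "(\<alpha> @ M # \<beta>) ! (?j + 1 + u) = \<beta> ! u" for u by (simp add: nth_append)
    show ?thesis unfolding k is_peak_def shift nth_beta using t2 by auto
  qed
qed

lemma valley_insert_max:
  assumes "\<forall>x\<in>set \<alpha>. x < M" "\<forall>x\<in>set \<beta>. x < M"
  shows "is_valley (\<alpha> @ M # \<beta>) k \<longleftrightarrow>
     (k + 1 \<le> length \<alpha> \<and> is_valley \<alpha> k) \<or> (k = length \<alpha> \<and> ends_desc \<alpha>)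
     \<or> (k = length \<alpha> + 2 \<and> starts_asc \<beta>)
     \<or> (k \<ge> length \<alpha> + 3 \<and> is_valley \<beta> (k - length \<alpha> - 1))"
proof -
  let ?j = "length \<alpha>"
  have alpha_below: "\<alpha> ! t < M" if "t < ?j" for t using assms(1) that by auto
  have beta_below: "\<beta> ! t < M" if "t < length \<beta>" for t using assms(2) that by auto
  have beta_first_below: "\<beta> ! 0 < M" if "2 \<le> length \<beta>" using that beta_below[of 0] by (cases \<beta>) auto
  consider "k + 1 \<le> ?j" | "k = ?j" | "k = ?j + 1" | "k = ?j + 2" | "k \<ge> ?j + 3" by linarith
  then show ?thesis
  proof cases
    case 1 then show ?thesis by (auto simp: is_valley_def nth_insert_max ends_desc_def)
  next
    case 2 then show ?thesis using alpha_below[of "?j - 1"] by (auto simp: is_valley_def nth_insert_max ends_desc_def)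
  next
    case 3 then show ?thesis using alpha_below[of "?j - 1"] beta_below[of 0] by (auto simp: is_valley_def nth_insert_max)
  next
    case 4
    with beta_first_below show ?thesis by (auto simp: is_valley_def nth_insert_max starts_asc_def)
  next
    case 5
    define t where "t = k - ?j - 1"
    have k: "k = ?j + 1 + t" and t2: "t \<ge> 2" using 5 by (auto simp: t_def)
    have shift: "?j + 1 + t - 2 = ?j + 1 + (t - 2)" "?j + 1 + t - 1 = ?j + 1 + (t - 1)" using t2 by auto
    have nth_beta: "(\<alpha> @ M # \<beta>) ! (?j + 1 + u) = \<beta> ! u" for u by (simp add: nth_append)
    show ?thesis unfolding k is_valley_def shift nth_beta using t2 by auto
  qed
qed

lemma ends_desc_insert_max:
  assumes a: "\<forall>x\<in>set \<alpha>. x < M" "\<forall>x\<in>set \<beta>. x < M"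
  shows "ends_desc (\<alpha> @ M # \<beta>) \<longleftrightarrow> (length \<beta> = 1 \<or> ends_desc \<beta>)"
proof (cases "length \<beta> \<ge> 2")
  case True
  have nth_beta: "(\<alpha> @ M # \<beta>) ! (length \<alpha> + 1 + u) = \<beta> ! u" for u by (simp add: nth_append)
  have last_two: "length (\<alpha> @ M # \<beta>) - 2 = length \<alpha> + 1 + (length \<beta> - 2)"
          "length (\<alpha> @ M # \<beta>) - 1 = length \<alpha> + 1 + (length \<beta> - 1)" using True by auto
  show ?thesis unfolding ends_desc_def last_two nth_beta using True by auto
next
  case False
  then consider "\<beta> = []" | b where "\<beta> = [b]" by (cases \<beta> rule: remdups_adj.cases) auto
  then show ?thesis
  proof cases
    case 1
    then show ?thesis using a(1)
      by (cases \<alpha> rule: rev_cases) (auto simp: ends_desc_def nth_append)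
  next
    case 2
    then show ?thesis using a(2) by (auto simp: ends_desc_def nth_append)
  qed
qed

definition insert_max_conditions :: "nat \<Rightarrow> nat list \<Rightarrow> nat list \<Rightarrow> bool" where
  "insert_max_conditions p \<alpha> \<beta> \<longleftrightarrow> parity_good p \<alpha> \<and> parity_good (p + length \<alpha> + 1) \<beta>
     \<and> (length \<alpha> \<ge> 1 \<and> \<beta> \<noteq> [] \<longrightarrow> odd (length \<alpha> + 1 + p))
     \<and> (ends_desc \<alpha> \<longrightarrow> even (length \<alpha> + p)) \<and> (starts_asc \<beta> \<longrightarrow> even (length \<alpha> + 2 + p))"

lemma parity_good_insert_maxD:
  assumes below: "\<forall>x\<in>set \<alpha>. x < M" "\<forall>x\<in>set \<beta>. x < M" and L: "parity_good p (\<alpha> @ M # \<beta>)"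
  shows "insert_max_conditions p \<alpha> \<beta>"
proof -
  let ?j = "length \<alpha>"
  have valleys_ok: "is_valley (\<alpha> @ M # \<beta>) k \<Longrightarrow> even (k + p)" for k using L by (simp add: parity_good_def)
  have peaks_ok: "is_peak (\<alpha> @ M # \<beta>) k \<Longrightarrow> odd (k + p)" for k using L by (simp add: parity_good_def)
  have "parity_good p \<alpha>"
    unfolding parity_good_def using valleys_ok peaks_ok valley_bounds peak_bounds
    by (auto simp: valley_insert_max[OF below] peak_insert_max[OF below])
  moreover have "parity_good (p + ?j + 1) \<beta>"
  proof -
    have "even (k + (p + ?j + 1))" if "is_valley \<beta> k" for k
      using valleys_ok[of "k + ?j + 1"] that valley_bounds[OF that] by (simp add: valley_insert_max[OF below] algebra_simps)
    moreover have "odd (k + (p + ?j + 1))" if "is_peak \<beta> k" for k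
      using peaks_ok[of "k + ?j + 1"] that peak_bounds[OF that] by (simp add: peak_insert_max[OF below] algebra_simps)
    ultimately show ?thesis by (simp add: parity_good_def)
  qed
  moreover have "odd (?j + 1 + p)" if "?j \<ge> 1" "\<beta> \<noteq> []"
    using peaks_ok[of "?j + 1"] that by (simp add: peak_insert_max[OF below])
  moreover have "even (?j + p)" if "ends_desc \<alpha>"
    using valleys_ok[of "?j"] that by (simp add: valley_insert_max[OF below])
  moreover have "even (?j + 2 + p)" if "starts_asc \<beta>"
    using valleys_ok[of "?j + 2"] that by (simp add: valley_insert_max[OF below])
  ultimately show ?thesis unfolding insert_max_conditions_def by blast
qed

lemma parity_good_insert_maxI:
  assumes below: "\<forall>x\<in>set \<alpha>. x < M" "\<forall>x\<in>set \<beta>. x < M" and conds: "insert_max_conditions p \<alpha> \<beta>"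
  shows "parity_good p (\<alpha> @ M # \<beta>)"
proof -
  let ?j = "length \<alpha>"
  have R: "parity_good p \<alpha> \<and> parity_good (p + length \<alpha> + 1) \<beta>
    \<and> (length \<alpha> \<ge> 1 \<and> \<beta> \<noteq> [] \<longrightarrow> odd (length \<alpha> + 1 + p))
    \<and> (ends_desc \<alpha> \<longrightarrow> even (length \<alpha> + p)) \<and> (starts_asc \<beta> \<longrightarrow> even (length \<alpha> + 2 + p))"
    using conds by (simp add: insert_max_conditions_def)
  have "even (k + p)" if "is_valley (\<alpha> @ M # \<beta>) k" for k
  proof -
    from that consider "k + 1 \<le> ?j \<and> is_valley \<alpha> k" | "k = ?j \<and> ends_desc \<alpha>" | "k = ?j + 2 \<and> starts_asc \<beta>"
      | "k \<ge> ?j + 3 \<and> is_valley \<beta> (k - ?j - 1)" by (auto simp: valley_insert_max[OF below])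
    then show ?thesis
    proof cases
      case 4
      have beta_valleys: "\<forall>i. is_valley \<beta> i \<longrightarrow> even (i + (p + ?j + 1))" using R unfolding parity_good_def by blast
      then have "even (k - ?j - 1 + (p + ?j + 1))" using 4 by blast
      moreover have "k - ?j - 1 + (p + ?j + 1) = k + p" using 4 by simp
      ultimately show ?thesis by simp
    qed (use R in \<open>auto simp: parity_good_def algebra_simps\<close>)
  qed
  moreover have "odd (k + p)" if "is_peak (\<alpha> @ M # \<beta>) k" for k
  proof -
    from that consider "k + 1 \<le> ?j \<and> is_peak \<alpha> k" | "k = ?j + 1 \<and> ?j \<ge> 1 \<and> \<beta> \<noteq> []"
      | "k \<ge> ?j + 3 \<and> is_peak \<beta> (k - ?j - 1)" by (auto simp: peak_insert_max[OF below])
    then show ?thesis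
    proof cases
      case 3
      have beta_peaks: "\<forall>i. is_peak \<beta> i \<longrightarrow> odd (i + (p + ?j + 1))" using R unfolding parity_good_def by blast
      then have "odd (k - ?j - 1 + (p + ?j + 1))" using 3 by blast
      moreover have "k - ?j - 1 + (p + ?j + 1) = k + p" using 3 by simp
      ultimately show ?thesis by simp
    qed (use R in \<open>auto simp: parity_good_def algebra_simps\<close>)
  qed
  ultimately show ?thesis by (simp add: parity_good_def)
qed

lemma parity_good_insert_max:
  assumes "\<forall>x\<in>set \<alpha>. x < M" "\<forall>x\<in>set \<beta>. x < M"
  shows "parity_good p (\<alpha> @ M # \<beta>) \<longleftrightarrow> insert_max_conditions p \<alpha> \<beta>"
  using parity_good_insert_maxD[OF assms] parity_good_insert_maxI[OF assms] by blast

section \<open>Counting permutations by the position of their maximum\<close>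

definition count_perms :: "(nat list \<Rightarrow> bool) \<Rightarrow> nat \<Rightarrow> nat" where
  "count_perms P m = card {xs \<in> perms_of m. P xs}"

lemma count_perms_cong: "(\<And>xs. xs \<in> perms_of m \<Longrightarrow> P xs = Q xs) \<Longrightarrow> count_perms P m = count_perms Q m"
  unfolding count_perms_def by (metis (mono_tags, lifting) Collect_cong)

lemma perms_of_length: "xs \<in> perms_of m \<Longrightarrow> length xs = m"
  by (auto simp: perms_of_def dest: distinct_card)

lemma count_perms_0: "count_perms P 0 = (if P [] then 1 else 0)"
proof -
  have "{xs \<in> perms_of 0. P xs} = (if P [] then {[]} else {})" by (auto simp: perms_of_def)
  then show ?thesis by (simp add: count_perms_def)
qed

lemma count_perms_Nil: "count_perms (\<lambda>\<beta>. \<beta> = []) m = (if m = 0 then 1 else 0)"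
proof (cases m)
  case 0 then show ?thesis by (simp add: count_perms_0)
next
  case (Suc k)
  then have "{xs \<in> perms_of m. xs = []} = {}" by (auto simp: perms_of_def)
  then show ?thesis using Suc by (simp add: count_perms_def)
qed

lemma count_perms_False: "count_perms (\<lambda>_. False) m = 0"
  by (simp add: count_perms_def)

lemma card_distinct_lists_map:
  assumes inj: "inj_on h S"
  shows "card {xs. distinct xs \<and> set xs = S \<and> P (map h xs)} = card {ys. distinct ys \<and> set ys = h ` S \<and> P ys}"
proof -
  let ?A = "{xs. distinct xs \<and> set xs = S \<and> P (map h xs)}"
  let ?B = "{ys. distinct ys \<and> set ys = h ` S \<and> P ys}"
  have inj_map: "inj_on (map h) ?A"
  proof (rule inj_onI)
    fix xs ys assume "xs \<in> ?A" "ys \<in> ?A" "map h xs = map h ys"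
    then show "xs = ys" using inj map_inj_on[of h xs ys] by auto
  qed
  have image: "map h ` ?A = ?B"
  proof (intro equalityI subsetI)
    fix ys assume "ys \<in> map h ` ?A"
    then obtain xs where xs: "xs \<in> ?A" and ys: "ys = map h xs" by blast
    have "distinct ys" using xs inj by (simp add: ys distinct_map)
    moreover have "set ys = h ` S" using xs by (simp add: ys)
    ultimately show "ys \<in> ?B" using xs ys by simp
  next
    fix ys assume ys: "ys \<in> ?B"
    define xs where "xs = map (the_inv_into S h) ys"
    have "map h xs = ys"
      unfolding xs_def map_map by (rule map_idI) (use ys inj in \<open>auto simp: f_the_inv_into_f\<close>)
    moreover have "set xs = S" using ys inj by (simp add: xs_def the_inv_into_onto)
    moreover have "distinct xs"
      using ys inj by (simp add: xs_def distinct_map inj_on_the_inv_into)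
    ultimately show "ys \<in> map h ` ?A" using ys by (intro image_eqI[where x = xs]) auto
  qed
  show ?thesis using card_image[OF inj_map] by (simp add: image)
qed

definition order_invariant :: "(nat list \<Rightarrow> bool) \<Rightarrow> bool" where
  "order_invariant P \<longleftrightarrow> (\<forall>xs h. strict_mono_on (set xs) h \<longrightarrow> P (map h xs) = P xs)"

definition label_rank :: "nat set \<Rightarrow> nat \<Rightarrow> nat" where
  "label_rank S x = Suc (card {y \<in> S. y < x})"

lemma label_rank_strict_mono: "finite S \<Longrightarrow> strict_mono_on S (label_rank S)"
proof (rule strict_mono_onI)
  fix x y assume "finite S" "x \<in> S" "y \<in> S" "x < y"
  then have "card {z \<in> S. z < x} < card {z \<in> S. z < y}" by (intro psubset_card_mono) auto
  then show "label_rank S x < label_rank S y" by (simp add: label_rank_def)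
qed

lemma label_rank_image:
  assumes S: "finite S"
  shows "label_rank S ` S = {1..card S}"
proof (rule card_subset_eq)
  show "label_rank S ` S \<subseteq> {1..card S}"
  proof
    fix z assume "z \<in> label_rank S ` S"
    then obtain x where x: "x \<in> S" "z = label_rank S x" by auto
    then have "card {y \<in> S. y < x} < card S" using S by (intro psubset_card_mono) auto
    then show "z \<in> {1..card S}" using x by (simp add: label_rank_def)
  qed
  show "card (label_rank S ` S) = card {1..card S}"
    using card_image[OF strict_mono_on_imp_inj_on[OF label_rank_strict_mono[OF S]]] by simp
qed simp

lemma count_standardize:
  assumes S: "finite S" and P: "order_invariant P"
  shows "card {xs. distinct xs \<and> set xs = S \<and> P xs} = count_perms P (card S)"
proof -
  have mono: "strict_mono_on S (label_rank S)" by (rule label_rank_strict_mono[OF S])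
  have "{xs. distinct xs \<and> set xs = S \<and> P xs} = {xs. distinct xs \<and> set xs = S \<and> P (map (label_rank S) xs)}"
    using P mono by (auto simp: order_invariant_def)
  then show ?thesis
    using card_distinct_lists_map[OF strict_mono_on_imp_inj_on[OF mono], of P] label_rank_image[OF S]
    by (simp add: count_perms_def perms_of_def)
qed

lemma count_complement: "count_perms P m = count_perms (\<lambda>xs. P (map (\<lambda>x. Suc m - x) xs)) m"
proof -
  have inj: "inj_on (\<lambda>x. Suc m - x) {1..m}" by (auto simp: inj_on_def)
  have "(\<lambda>x. Suc m - x) ` {1..m} = {1..m}"
  proof
    show "{1..m} \<subseteq> (\<lambda>x. Suc m - x) ` {1..m}"
    proof
      fix y assume "y \<in> {1..m}"
      then have "y = Suc m - (Suc m - y)" "Suc m - y \<in> {1..m}" by auto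
      then show "y \<in> (\<lambda>x. Suc m - x) ` {1..m}" by blast
    qed
  qed auto
  then show ?thesis
    using card_distinct_lists_map[OF inj, of P] by (simp add: count_perms_def perms_of_def)
qed

lemma complement_antimono: "xs \<in> perms_of m \<Longrightarrow> strict_antimono_on (set xs) (\<lambda>x. Suc m - x)"
  by (auto intro!: monotone_onI simp: perms_of_def)

lemma strict_antimono_on_less:
  fixes h :: "'a::linorder \<Rightarrow> 'b::linorder"
  assumes "strict_antimono_on A h" "a \<in> A" "b \<in> A"
  shows "h a < h b \<longleftrightarrow> b < a"
  using assms by (metis monotone_onD linorder_neqE order_less_asym)

lemma peak_map: "strict_mono_on (set xs) h \<Longrightarrow> is_peak (map h xs) i \<longleftrightarrow> is_peak xs i"
  unfolding is_peak_def by (auto simp: strict_mono_on_less)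

lemma valley_map: "strict_mono_on (set xs) h \<Longrightarrow> is_valley (map h xs) i \<longleftrightarrow> is_valley xs i"
  unfolding is_valley_def by (auto simp: strict_mono_on_less)

lemma ends_desc_map: "strict_mono_on (set xs) h \<Longrightarrow> ends_desc (map h xs) \<longleftrightarrow> ends_desc xs"
  unfolding ends_desc_def by (auto simp: strict_mono_on_less)

lemma parity_good_map: "strict_mono_on (set xs) h \<Longrightarrow> parity_good p (map h xs) \<longleftrightarrow> parity_good p xs"
  unfolding parity_good_def by (simp add: peak_map valley_map)

lemma peak_map_anti: "strict_antimono_on (set xs) h \<Longrightarrow> is_peak (map h xs) i \<longleftrightarrow> is_valley xs i"
  unfolding is_peak_def is_valley_def by (auto simp: strict_antimono_on_less)

lemma valley_map_anti: "strict_antimono_on (set xs) h \<Longrightarrow> is_valley (map h xs) i \<longleftrightarrow> is_peak xs i"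
  unfolding is_peak_def is_valley_def by (auto simp: strict_antimono_on_less)

lemma ends_desc_map_anti: "strict_antimono_on (set xs) h \<Longrightarrow> ends_desc (map h xs) \<longleftrightarrow> ends_asc xs"
  unfolding ends_desc_def ends_asc_def by (auto simp: strict_antimono_on_less)

lemma parity_good_map_anti:
  "strict_antimono_on (set xs) h \<Longrightarrow> parity_good p (map h xs) \<longleftrightarrow> parity_good (Suc p) xs"
  unfolding parity_good_def by (auto simp: peak_map_anti valley_map_anti)

lemma finite_short_lists: "finite {xs::nat list. set xs \<subseteq> {1..n} \<and> length xs \<le> n}"
  by (rule finite_lists_length_le) simp

lemma distinct_length_le: "distinct xs \<Longrightarrow> set xs \<subseteq> {1..n} \<Longrightarrow> length xs \<le> n"
  by (metis card_atLeastAtMost card_mono diff_Suc_1 distinct_card finite_atLeastAtMost)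

lemma split_pairs_by_labels:
  "{(\<alpha>, \<beta>). distinct (\<alpha> @ \<beta>) \<and> set (\<alpha> @ \<beta>) = {1..n} \<and> length \<alpha> = j \<and> Pa \<alpha> \<and> Pb \<beta>}
   = (\<Union>S\<in>{S. S \<subseteq> {1..n} \<and> card S = j}.
        {\<alpha>. distinct \<alpha> \<and> set \<alpha> = S \<and> Pa \<alpha>} \<times> {\<beta>. distinct \<beta> \<and> set \<beta> = {1..n} - S \<and> Pb \<beta>})"
  (is "?X = (\<Union>S\<in>?Sub. ?A S \<times> ?B S)")
proof
  show "?X \<subseteq> (\<Union>S\<in>?Sub. ?A S \<times> ?B S)"
  proof
    fix p assume "p \<in> ?X"
    then obtain \<alpha> \<beta> where p: "p = (\<alpha>, \<beta>)" and h: "distinct (\<alpha> @ \<beta>)" "set (\<alpha> @ \<beta>) = {1..n}"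
      "length \<alpha> = j" "Pa \<alpha>" "Pb \<beta>" by auto
    have "set \<alpha> \<in> ?Sub" using h by (auto simp: distinct_card)
    moreover have "\<alpha> \<in> ?A (set \<alpha>)" using h by simp
    moreover have "\<beta> \<in> ?B (set \<alpha>)" using h by auto
    ultimately show "p \<in> (\<Union>S\<in>?Sub. ?A S \<times> ?B S)" using p by blast
  qed
next
  show "(\<Union>S\<in>?Sub. ?A S \<times> ?B S) \<subseteq> ?X"
  proof
    fix p assume "p \<in> (\<Union>S\<in>?Sub. ?A S \<times> ?B S)"
    then obtain S \<alpha> \<beta> where p: "p = (\<alpha>, \<beta>)" and S: "S \<subseteq> {1..n}" "card S = j"
      and a: "\<alpha> \<in> ?A S" and b: "\<beta> \<in> ?B S" by blast
    have "distinct (\<alpha> @ \<beta>)" using a b by auto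
    moreover have "set (\<alpha> @ \<beta>) = {1..n}" using a b S by auto
    moreover have "length \<alpha> = j" using a S by (auto simp: distinct_card[symmetric])
    ultimately show "p \<in> ?X" using p a b by auto
  qed
qed

text \<open>Choosing the label set of \<open>\<alpha>\<close> and standardizing both parts counts these pairs for
  order-invariant properties of the parts.\<close>

lemma card_split_pairs:
  assumes Ia: "order_invariant Pa" and Ib: "order_invariant Pb" and j: "j \<le> n"
  shows "card {(\<alpha>, \<beta>). distinct (\<alpha> @ \<beta>) \<and> set (\<alpha> @ \<beta>) = {1..n} \<and> length \<alpha> = j \<and> Pa \<alpha> \<and> Pb \<beta>}
         = (n choose j) * count_perms Pa j * count_perms Pb (n - j)"
proof -
  let ?Sub = "{S. S \<subseteq> {1..n} \<and> card S = j}"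
  define A where "A S = {\<alpha>. distinct \<alpha> \<and> set \<alpha> = S \<and> Pa \<alpha>}" for S
  define B where "B S = {\<beta>. distinct \<beta> \<and> set \<beta> = {1..n} - S \<and> Pb \<beta>}" for S
  have finA: "finite (A S)" if "S \<subseteq> {1..n}" for S
    by (rule finite_subset[OF _ finite_short_lists[of n]]) (use that distinct_length_le in \<open>auto simp: A_def\<close>)
  have finB: "finite (B S)" for S
    by (rule finite_subset[OF _ finite_short_lists[of n]]) (use distinct_length_le in \<open>auto simp: B_def\<close>)
  have finSub: "finite ?Sub" by (rule finite_subset[of _ "Pow {1..n}"]) auto
  have "card {(\<alpha>, \<beta>). distinct (\<alpha> @ \<beta>) \<and> set (\<alpha> @ \<beta>) = {1..n} \<and> length \<alpha> = j \<and> Pa \<alpha> \<and> Pb \<beta>}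
        = (\<Sum>S\<in>?Sub. card (A S \<times> B S))"
    unfolding split_pairs_by_labels A_def[symmetric] B_def[symmetric]
  proof (rule card_UN_disjoint[OF finSub])
    show "\<forall>S\<in>?Sub. finite (A S \<times> B S)" using finA finB by auto
    show "\<forall>S\<in>?Sub. \<forall>T\<in>?Sub. S \<noteq> T \<longrightarrow> A S \<times> B S \<inter> A T \<times> B T = {}"
      by (auto simp: A_def)
  qed
  also have "\<dots> = (\<Sum>S\<in>?Sub. count_perms Pa j * count_perms Pb (n - j))"
  proof (rule sum.cong)
    fix S assume S: "S \<in> ?Sub"
    have "card (A S) = count_perms Pa j"
      using count_standardize[OF _ Ia, of S] S finite_subset[of S "{1..n}"] by (auto simp: A_def)
    moreover have "card (B S) = count_perms Pb (n - j)"
    proof -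
      have "card ({1..n} - S) = n - j" using S by (auto simp: card_Diff_subset finite_subset)
      then show ?thesis using count_standardize[OF _ Ib, of "{1..n} - S"] by (auto simp: B_def)
    qed
    ultimately show "card (A S \<times> B S) = count_perms Pa j * count_perms Pb (n - j)" by (simp add: card_cartesian_product)
  qed simp
  also have "\<dots> = (n choose j) * count_perms Pa j * count_perms Pb (n - j)"
    using n_subsets[of "{1..n}" j] by simp
  finally show ?thesis .
qed

lemma insert_max_bij:
  "bij_betw (\<lambda>(\<alpha>, \<beta>). \<alpha> @ Suc n # \<beta>) {(\<alpha>, \<beta>). distinct (\<alpha> @ \<beta>) \<and> set (\<alpha> @ \<beta>) = {1..n}}
     (perms_of (Suc n))"
proof (rule bij_betw_imageI)
  show "inj_on (\<lambda>(\<alpha>, \<beta>). \<alpha> @ Suc n # \<beta>) {(\<alpha>, \<beta>). distinct (\<alpha> @ \<beta>) \<and> set (\<alpha> @ \<beta>) = {1..n}}"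
  proof (rule inj_onI, clarify)
    fix \<alpha> \<beta> \<alpha>' \<beta>' :: "nat list"
    assume labels: "set (\<alpha> @ \<beta>) = {1..n}" and eq: "\<alpha> @ Suc n # \<beta> = \<alpha>' @ Suc n # \<beta>'"
    have "Suc n \<notin> set (\<alpha> @ \<beta>)" unfolding labels by simp
    then have "Suc n \<notin> set \<alpha>" "Suc n \<notin> set \<beta>" by simp_all
    then show "\<alpha> = \<alpha>' \<and> \<beta> = \<beta>'" using eq by (simp add: append_Cons_eq_iff)
  qed
  show "(\<lambda>(\<alpha>, \<beta>). \<alpha> @ Suc n # \<beta>) ` {(\<alpha>, \<beta>). distinct (\<alpha> @ \<beta>) \<and> set (\<alpha> @ \<beta>) = {1..n}}
          = perms_of (Suc n)"
  proof (intro equalityI subsetI)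
    fix xs assume "xs \<in> (\<lambda>(\<alpha>, \<beta>). \<alpha> @ Suc n # \<beta>) ` {(\<alpha>, \<beta>). distinct (\<alpha> @ \<beta>) \<and> set (\<alpha> @ \<beta>) = {1..n}}"
    then obtain \<alpha> \<beta> where xs: "xs = \<alpha> @ Suc n # \<beta>" and ab: "distinct (\<alpha> @ \<beta>)" "set (\<alpha> @ \<beta>) = {1..n}"
      by auto
    have "Suc n \<notin> set (\<alpha> @ \<beta>)" using ab(2) by simp
    then have "distinct xs" using ab(1) xs by simp
    moreover have "set xs = insert (Suc n) {1..n}" using ab(2) xs by auto
    ultimately show "xs \<in> perms_of (Suc n)" by (simp add: perms_of_def atLeastAtMostSuc_conv)
  next
    fix xs assume xs: "xs \<in> perms_of (Suc n)"
    then have "Suc n \<in> set xs" by (auto simp: perms_of_def)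
    then obtain \<alpha> \<beta> where split: "xs = \<alpha> @ Suc n # \<beta>" by (meson split_list)
    have distinct: "distinct (\<alpha> @ \<beta>)" and fresh: "Suc n \<notin> set (\<alpha> @ \<beta>)"
      using xs split by (auto simp: perms_of_def)
    have "insert (Suc n) (set (\<alpha> @ \<beta>)) = {1..Suc n}" using xs split by (auto simp: perms_of_def)
    then have "set (\<alpha> @ \<beta>) = {1..Suc n} - {Suc n}" using fresh by (metis Diff_insert_absorb)
    also have "\<dots> = {1..n}" by auto
    finally show "xs \<in> (\<lambda>(\<alpha>, \<beta>). \<alpha> @ Suc n # \<beta>) ` {(\<alpha>, \<beta>). distinct (\<alpha> @ \<beta>) \<and> set (\<alpha> @ \<beta>) = {1..n}}"
      using split distinct by force
  qed
qed

lemma image_filter: "{x \<in> f ` A. P x} = f ` {a \<in> A. P (f a)}"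
  by auto

lemma count_perms_Suc_as_pairs:
  "count_perms \<Phi> (Suc n) = card {(\<alpha>, \<beta>). distinct (\<alpha> @ \<beta>) \<and> set (\<alpha> @ \<beta>) = {1..n} \<and> \<Phi> (\<alpha> @ Suc n # \<beta>)}"
proof -
  let ?F = "\<lambda>(\<alpha>, \<beta>). \<alpha> @ Suc n # \<beta>" and ?pairs = "{(\<alpha>, \<beta>). distinct (\<alpha> @ \<beta>) \<and> set (\<alpha> @ \<beta>) = {1..n}}"
  have bij: "bij_betw ?F ?pairs (perms_of (Suc n))" by (rule insert_max_bij)
  have image: "{xs \<in> perms_of (Suc n). \<Phi> xs} = ?F ` {p \<in> ?pairs. \<Phi> (?F p)}"
    unfolding bij_betw_imp_surj_on[OF bij, symmetric] by (rule image_filter)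
  have inj: "inj_on ?F {p \<in> ?pairs. \<Phi> (?F p)}"
    by (rule inj_on_subset[OF bij_betw_imp_inj_on[OF bij]]) (rule Collect_restrict)
  have "{p \<in> ?pairs. \<Phi> (?F p)}
        = {(\<alpha>, \<beta>). distinct (\<alpha> @ \<beta>) \<and> set (\<alpha> @ \<beta>) = {1..n} \<and> \<Phi> (\<alpha> @ Suc n # \<beta>)}"
    by (simp add: case_prod_beta' conj_assoc)
  then show ?thesis
    unfolding count_perms_def image card_image[OF inj] by simp
qed

lemma count_by_max_position:
  fixes \<Phi> :: "nat list \<Rightarrow> bool" and Pa Pb :: "nat \<Rightarrow> nat list \<Rightarrow> bool"
  assumes split: "\<And>\<alpha> \<beta>. distinct (\<alpha> @ \<beta>) \<Longrightarrow> set (\<alpha> @ \<beta>) = {1..n} \<Longrightarrow>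
                \<Phi> (\<alpha> @ Suc n # \<beta>) = (Pa (length \<alpha>) \<alpha> \<and> Pb (length \<alpha>) \<beta>)"
    and Ia: "\<And>j. order_invariant (Pa j)" and Ib: "\<And>j. order_invariant (Pb j)"
  shows "count_perms \<Phi> (Suc n) = (\<Sum>j=0..n. (n choose j) * count_perms (Pa j) j * count_perms (Pb j) (n - j))"
proof -
  define X where "X j = {(\<alpha>, \<beta>). distinct (\<alpha> @ \<beta>) \<and> set (\<alpha> @ \<beta>) = {1..n} \<and> length \<alpha> = j \<and> Pa j \<alpha> \<and> Pb j \<beta>}"
    for j
  have "{(\<alpha>, \<beta>). distinct (\<alpha> @ \<beta>) \<and> set (\<alpha> @ \<beta>) = {1..n} \<and> \<Phi> (\<alpha> @ Suc n # \<beta>)} = (\<Union>j\<in>{0..n}. X j)"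
  proof (intro equalityI subsetI)
    fix p assume "p \<in> {(\<alpha>, \<beta>). distinct (\<alpha> @ \<beta>) \<and> set (\<alpha> @ \<beta>) = {1..n} \<and> \<Phi> (\<alpha> @ Suc n # \<beta>)}"
    then obtain \<alpha> \<beta> where p: "p = (\<alpha>, \<beta>)" "distinct (\<alpha> @ \<beta>)" "set (\<alpha> @ \<beta>) = {1..n}"
      "\<Phi> (\<alpha> @ Suc n # \<beta>)" by auto
    moreover have "length \<alpha> \<le> n" using p distinct_length_le[of \<alpha> n] by auto
    ultimately show "p \<in> (\<Union>j\<in>{0..n}. X j)" using split[of \<alpha> \<beta>] by (auto simp: X_def)
  next
    fix p assume "p \<in> (\<Union>j\<in>{0..n}. X j)"
    then obtain \<alpha> \<beta> where "p = (\<alpha>, \<beta>)" "distinct (\<alpha> @ \<beta>)" "set (\<alpha> @ \<beta>) = {1..n}"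
      "Pa (length \<alpha>) \<alpha>" "Pb (length \<alpha>) \<beta>" by (auto simp: X_def)
    then show "p \<in> {(\<alpha>, \<beta>). distinct (\<alpha> @ \<beta>) \<and> set (\<alpha> @ \<beta>) = {1..n} \<and> \<Phi> (\<alpha> @ Suc n # \<beta>)}"
      using split[of \<alpha> \<beta>] by simp
  qed
  then have "count_perms \<Phi> (Suc n) = card (\<Union>j\<in>{0..n}. X j)"
    by (simp add: count_perms_Suc_as_pairs)
  also have "\<dots> = (\<Sum>j=0..n. card (X j))"
  proof (rule card_UN_disjoint)
    show "\<forall>j\<in>{0..n}. finite (X j)"
    proof
      fix j
      have "X j \<subseteq> {xs. set xs \<subseteq> {1..n} \<and> length xs \<le> n} \<times> {xs. set xs \<subseteq> {1..n} \<and> length xs \<le> n}"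
        using distinct_length_le by (auto simp: X_def)
      then show "finite (X j)"
        by (rule finite_subset) (intro finite_cartesian_product finite_short_lists)
    qed
  qed (auto simp: X_def)
  also have "\<dots> = (\<Sum>j=0..n. (n choose j) * count_perms (Pa j) j * count_perms (Pb j) (n - j))"
    by (rule sum.cong) (simp, unfold X_def, rule card_split_pairs[OF Ia Ib], simp)
  finally show ?thesis .
qed

section \<open>The recurrences\<close>

lemma f_count_eq: "f_count n = count_perms (parity_good 0) n"
  by (simp add: f_count_def count_perms_def parity_good_def)

definition good_ending :: "nat list \<Rightarrow> bool" where
  "good_ending xs \<longleftrightarrow> parity_good 0 xs \<and> xs \<noteq> [] \<and>
     (if odd (length xs) then \<not> ends_desc xs else ends_desc xs)"

definition e_count :: "nat \<Rightarrow> nat" where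
  "e_count m = count_perms good_ending m"

lemma f_count_0: "f_count 0 = 1"
  by (simp add: f_count_eq count_perms_0 parity_good_Nil)

lemma e_count_0: "e_count 0 = 0"
  by (simp add: e_count_def count_perms_0 good_ending_def)

text \<open>Complementation exchanges peaks with valleys, hence shifts the parity condition by one.\<close>

lemma complement_swaps:
  assumes "xs \<in> perms_of m"
  shows "parity_good p (map (\<lambda>x. Suc m - x) xs) = parity_good (Suc p) xs"
    and "ends_desc (map (\<lambda>x. Suc m - x) xs) = ends_asc xs"
  using complement_antimono[OF assms] by (simp_all add: parity_good_map_anti ends_desc_map_anti)

lemma count_parity_good_1: "count_perms (parity_good (Suc 0)) m = count_perms (parity_good 0) m"
proof -
  have "count_perms (parity_good 0) m = count_perms (\<lambda>xs. parity_good 0 (map (\<lambda>x. Suc m - x) xs)) m"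
    by (rule count_complement)
  also have "\<dots> = count_perms (parity_good (Suc 0)) m"
    by (rule count_perms_cong) (simp add: complement_swaps)
  finally show ?thesis by simp
qed

lemma labels_below_max:
  assumes "set (\<alpha> @ \<beta>) = {1..n}"
  shows "(\<forall>x\<in>set \<alpha>. x < Suc n) \<and> (\<forall>x\<in>set \<beta>. x < Suc n)"
proof -
  have "set \<alpha> \<subseteq> set (\<alpha> @ \<beta>)" "set \<beta> \<subseteq> set (\<alpha> @ \<beta>)" by auto
  then show ?thesis unfolding assms by auto
qed

lemma parity_good_0_insert_max:
  assumes below: "\<forall>x\<in>set \<alpha>. x < M" "\<forall>x\<in>set \<beta>. x < M"
  shows "parity_good 0 (\<alpha> @ M # \<beta>) \<longleftrightarrow>
    (if even (length \<alpha>) then parity_good 0 \<alpha> \<and> parity_good 1 \<beta>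
     else parity_good 0 \<alpha> \<and> \<not> ends_desc \<alpha> \<and> \<beta> = [])"
proof (cases "even (length \<alpha>)")
  case True
  then show ?thesis
    unfolding parity_good_insert_max[OF below] insert_max_conditions_def using parity_good_odd[of "0 + length \<alpha> + 1" \<beta>] by simp
next
  case False
  then show ?thesis
    unfolding parity_good_insert_max[OF below] insert_max_conditions_def using parity_good_even[of "0 + length \<alpha> + 1" \<beta>]
    by (auto simp: parity_good_Nil starts_asc_def Suc_le_eq)
qed

lemma good_ending_insert_max:
  assumes below: "\<forall>x\<in>set \<alpha>. x < M" "\<forall>x\<in>set \<beta>. x < M"
  shows "good_ending (\<alpha> @ M # \<beta>) \<longleftrightarrow> even (length \<alpha>) \<and> parity_good 0 \<alpha> \<and> parity_good 1 \<beta> \<and>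
    (if even (length \<alpha> + length \<beta>) then \<not> (length \<beta> = 1 \<or> ends_desc \<beta>) else length \<beta> = 1 \<or> ends_desc \<beta>)"
proof (cases "even (length \<alpha>)")
  case True
  then show ?thesis
    unfolding good_ending_def parity_good_0_insert_max[OF below] ends_desc_insert_max[OF below] by auto
next
  case False
  then have "Suc 0 \<le> length \<alpha>" by (cases "length \<alpha>") auto
  with False show ?thesis
    unfolding good_ending_def parity_good_0_insert_max[OF below] ends_desc_insert_max[OF below]
    by (auto simp: ends_desc_def)
qed

lemma sum_even_plus_last:
  fixes t a :: "nat \<Rightarrow> nat"
  assumes "\<And>j. j \<le> n \<Longrightarrow> t j = (if even j then a j else 0) + (if j = n \<and> c then b else 0)"
  shows "(\<Sum>j=0..n. t j) = (\<Sum>j=0..n. if even j then a j else 0) + (if c then b else 0)"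
proof -
  have "(\<Sum>j=0..n. t j) = (\<Sum>j=0..n. (if even j then a j else 0) + (if j = n \<and> c then b else 0))"
    using assms by (intro sum.cong) auto
  then show ?thesis by (simp add: sum.distrib sum.delta')
qed

theorem f_count_rec:
  "f_count (Suc n) = (\<Sum>j=0..n. if even j then (n choose j) * f_count j * f_count (n - j) else 0)
                     + (if odd n then e_count n else 0)"
proof -
  define Pa where "Pa j = (if even j then parity_good 0 else (\<lambda>\<alpha>. parity_good 0 \<alpha> \<and> \<not> ends_desc \<alpha>))"
    for j :: nat
  define Pb where "Pb j = (if even j then parity_good 1 else (\<lambda>\<beta>::nat list. \<beta> = []))" for j :: nat
  have split: "parity_good 0 (\<alpha> @ Suc n # \<beta>) = (Pa (length \<alpha>) \<alpha> \<and> Pb (length \<alpha>) \<beta>)"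
    if "set (\<alpha> @ \<beta>) = {1..n}" for \<alpha> \<beta>
    using parity_good_0_insert_max labels_below_max[OF that] by (simp add: Pa_def Pb_def)
  have "order_invariant (Pa j)" "order_invariant (Pb j)" for j
    by (auto simp: Pa_def Pb_def order_invariant_def parity_good_map ends_desc_map)
  then have "f_count (Suc n) = (\<Sum>j=0..n. (n choose j) * count_perms (Pa j) j * count_perms (Pb j) (n - j))"
    unfolding f_count_eq using split by (intro count_by_max_position)
  also have "\<dots> = (\<Sum>j=0..n. if even j then (n choose j) * f_count j * f_count (n - j) else 0)
                  + (if odd n then e_count n else 0)"
  proof (rule sum_even_plus_last)
    fix j assume j: "j \<le> n"
    show "(n choose j) * count_perms (Pa j) j * count_perms (Pb j) (n - j)
          = (if even j then (n choose j) * f_count j * f_count (n - j) else 0)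
            + (if j = n \<and> odd n then e_count n else 0)"
    proof (cases "even j")
      case True
      then show ?thesis by (auto simp: Pa_def Pb_def f_count_eq count_parity_good_1)
    next
      case False
      have "count_perms (\<lambda>\<alpha>. parity_good 0 \<alpha> \<and> \<not> ends_desc \<alpha>) j = e_count j"
        unfolding e_count_def using False
        by (intro count_perms_cong) (auto simp: good_ending_def dest: perms_of_length)
      then show ?thesis using False j by (auto simp: Pa_def Pb_def count_perms_Nil)
    qed
  qed
  finally show ?thesis .
qed

text \<open>After complementation, the right-hand parts in the recurrence for \<open>e\<close> satisfy the
  following condition, which for nonempty permutations is exactly \<open>good_ending\<close>.\<close>

lemma good_ending_iff:
  assumes xs: "xs \<in> perms_of m" and "m \<noteq> 0"
  shows "(parity_good 0 xs \<and> (if even m then \<not> (m = 1 \<or> ends_asc xs) else m = 1 \<or> ends_asc xs))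
         = good_ending xs"
proof (cases "m = 1")
  case True
  then show ?thesis using perms_of_length[OF xs] by (auto simp: good_ending_def ends_desc_def ends_asc_def)
next
  case False
  have "distinct xs" using xs by (simp add: perms_of_def)
  moreover have "2 \<le> length xs" using perms_of_length[OF xs] False \<open>m \<noteq> 0\<close> by auto
  ultimately show ?thesis
    using ends_asc_iff perms_of_length[OF xs] False \<open>m \<noteq> 0\<close> by (auto simp: good_ending_def)
qed

lemma count_ending_complement:
  "count_perms (\<lambda>\<beta>. parity_good 1 \<beta> \<and>
      (if even m then \<not> (length \<beta> = 1 \<or> ends_desc \<beta>) else length \<beta> = 1 \<or> ends_desc \<beta>)) m
   = e_count m + (if m = 0 then 1 else 0)"
proof -
  let ?Q = "\<lambda>\<beta>. parity_good 1 \<beta> \<and>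
      (if even m then \<not> (length \<beta> = 1 \<or> ends_desc \<beta>) else length \<beta> = 1 \<or> ends_desc \<beta>)"
  let ?R = "\<lambda>xs. parity_good 0 xs \<and> (if even m then \<not> (m = 1 \<or> ends_asc xs) else m = 1 \<or> ends_asc xs)"
  have "count_perms ?Q m = count_perms (\<lambda>xs. ?Q (map (\<lambda>x. Suc m - x) xs)) m"
    by (rule count_complement)
  also have "\<dots> = count_perms ?R m"
  proof (rule count_perms_cong)
    fix xs assume xs: "xs \<in> perms_of m"
    have "parity_good 2 xs = parity_good 0 xs" by (rule parity_good_even) simp
    then show "?Q (map (\<lambda>x. Suc m - x) xs) = ?R xs"
      using complement_swaps[OF xs] perms_of_length[OF xs] by (simp add: numeral_2_eq_2)
  qed
  also have "\<dots> = e_count m + (if m = 0 then 1 else 0)"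
  proof (cases "m = 0")
    case True
    then show ?thesis by (simp add: count_perms_0 e_count_0 parity_good_Nil ends_asc_def)
  next
    case False
    then have "count_perms ?R m = count_perms good_ending m"
      by (intro count_perms_cong good_ending_iff)
    then show ?thesis using False by (simp add: e_count_def)
  qed
  finally show ?thesis .
qed

theorem e_count_rec:
  "e_count (Suc n) = (\<Sum>j=0..n. if even j then (n choose j) * f_count j * e_count (n - j) else 0)
                     + (if even n then f_count n else 0)"
proof -
  define Pa where "Pa j = (if even j then parity_good 0 else (\<lambda>_::nat list. False))" for j :: nat
  define Pb where "Pb j = (if even j then (\<lambda>\<beta>. parity_good 1 \<beta> \<and>
      (if even n then \<not> (length \<beta> = 1 \<or> ends_desc \<beta>) else length \<beta> = 1 \<or> ends_desc \<beta>))
      else (\<lambda>_::nat list. False))" for j :: nat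
  have split: "good_ending (\<alpha> @ Suc n # \<beta>) = (Pa (length \<alpha>) \<alpha> \<and> Pb (length \<alpha>) \<beta>)"
    if "distinct (\<alpha> @ \<beta>)" "set (\<alpha> @ \<beta>) = {1..n}" for \<alpha> \<beta>
  proof -
    have "length \<alpha> + length \<beta> = n" using distinct_card[OF that(1)] that(2) by simp
    then show ?thesis
      using good_ending_insert_max labels_below_max[OF that(2)] by (auto simp: Pa_def Pb_def)
  qed
  have "order_invariant (Pa j)" "order_invariant (Pb j)" for j
    by (auto simp: Pa_def Pb_def order_invariant_def parity_good_map ends_desc_map)
  then have "e_count (Suc n) = (\<Sum>j=0..n. (n choose j) * count_perms (Pa j) j * count_perms (Pb j) (n - j))"
    unfolding e_count_def using split by (intro count_by_max_position)
  also have "\<dots> = (\<Sum>j=0..n. if even j then (n choose j) * f_count j * e_count (n - j) else 0)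
                  + (if even n then f_count n else 0)"
  proof (rule sum_even_plus_last)
    fix j assume j: "j \<le> n"
    show "(n choose j) * count_perms (Pa j) j * count_perms (Pb j) (n - j)
          = (if even j then (n choose j) * f_count j * e_count (n - j) else 0)
            + (if j = n \<and> even n then f_count n else 0)"
    proof (cases "even j")
      case True
      then have "even n = even (n - j)" using j by auto
      then have "count_perms (Pb j) (n - j) = e_count (n - j) + (if n - j = 0 then 1 else 0)"
        using True count_ending_complement[of "n - j"] by (simp add: Pb_def)
      then show ?thesis using True j by (auto simp: Pa_def f_count_eq algebra_simps)
    next
      case False
      then show ?thesis using j by (auto simp: Pa_def Pb_def count_perms_False)
    qed
  qed
  finally show ?thesis .
qed

section \<open>Power series tools\<close>

definition fps_reflect :: "'a::idom fps \<Rightarrow> 'a fps" where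
  "fps_reflect X = X oo (- fps_X)"

lemma fps_reflect_nth: "fps_reflect X $ n = (-1) ^ n * X $ n"
  by (simp add: fps_reflect_def fps_compose_uminus')

lemma fps_reflect_mult: "fps_reflect (X * Y) = fps_reflect X * fps_reflect Y"
  unfolding fps_reflect_def by (rule fps_compose_mult_distrib) simp

lemma fps_reflect_add: "fps_reflect (X + Y) = fps_reflect X + fps_reflect Y"
  and fps_reflect_diff: "fps_reflect (X - Y) = fps_reflect X - fps_reflect Y"
  and fps_reflect_const: "fps_reflect (fps_const c) = fps_const c"
  and fps_reflect_numeral: "fps_reflect (numeral k) = numeral k"
  by (auto intro!: fps_ext simp: fps_reflect_nth algebra_simps numeral_fps_const)

lemma fps_reflect_exp: "fps_reflect (fps_exp (c :: 'a::field_char_0)) = fps_exp (- c)"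
  by (rule fps_ext) (simp add: fps_reflect_nth power_minus')

lemma fps_reflect_sin: "fps_reflect (fps_sin c) = - fps_sin c"
  by (rule fps_ext) (auto simp: fps_reflect_nth fps_sin_def elim!: oddE)

lemma fps_reflect_cos: "fps_reflect (fps_cos c) = fps_cos c"
  by (rule fps_ext) (auto simp: fps_reflect_nth fps_cos_def elim!: evenE)

definition fps_even_part :: "'a::zero fps \<Rightarrow> 'a fps" where
  "fps_even_part X = Abs_fps (\<lambda>n. if even n then X $ n else 0)"

definition fps_odd_part :: "'a::zero fps \<Rightarrow> 'a fps" where
  "fps_odd_part X = Abs_fps (\<lambda>n. if even n then 0 else X $ n)"

text \<open>The even and odd parts in terms of reflection; this is how they enter the algebra.\<close>

lemma fps_even_part_reflect:
  "fps_even_part (X :: 'a::field_char_0 fps) = fps_const (1/2) * (X + fps_reflect X)"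
  by (rule fps_ext) (simp add: fps_even_part_def fps_reflect_nth)

lemma fps_odd_part_reflect:
  "fps_odd_part (X :: 'a::field_char_0 fps) = fps_const (1/2) * (X - fps_reflect X)"
  by (rule fps_ext) (simp add: fps_odd_part_def fps_reflect_nth)

definition causal :: "('a fps \<Rightarrow> 'a fps \<Rightarrow> 'a fps) \<Rightarrow> bool" where
  "causal F \<longleftrightarrow> (\<forall>n X Y X' Y'. (\<forall>k\<le>n. X $ k = X' $ k \<and> Y $ k = Y' $ k) \<longrightarrow> F X Y $ n = F X' Y' $ n)"

lemma causalI:
  "(\<And>n X Y X' Y'. (\<And>k. k \<le> n \<Longrightarrow> X $ k = X' $ k \<and> Y $ k = Y' $ k) \<Longrightarrow> F X Y $ n = F X' Y' $ n)
    \<Longrightarrow> causal F"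
  unfolding causal_def by blast

lemma causalD:
  "causal F \<Longrightarrow> (\<And>k. k \<le> n \<Longrightarrow> X $ k = X' $ k \<and> Y $ k = Y' $ k) \<Longrightarrow> F X Y $ n = F X' Y' $ n"
  unfolding causal_def by blast

lemma causal_fst: "causal (\<lambda>X Y. X)"
  and causal_snd: "causal (\<lambda>X Y. Y)"
  and causal_const: "causal (\<lambda>X Y. C)"
  by (auto intro!: causalI)

lemma causal_coeffwise:
  assumes "causal F" "causal G" and coeffwise: "\<And>A B n. H A B $ n = h n (A $ n) (B $ n)"
  shows "causal (\<lambda>X Y. H (F X Y) (G X Y))"
proof (rule causalI)
  fix n and X Y X' Y' :: "'a fps"
  assume "\<And>k. k \<le> n \<Longrightarrow> X $ k = X' $ k \<and> Y $ k = Y' $ k"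
  then have "F X Y $ n = F X' Y' $ n" "G X Y $ n = G X' Y' $ n"
    by (blast intro: causalD[OF assms(1)] causalD[OF assms(2)])+
  then show "H (F X Y) (G X Y) $ n = H (F X' Y') (G X' Y') $ n"
    by (simp add: coeffwise)
qed

lemma causal_add: "causal F \<Longrightarrow> causal G \<Longrightarrow> causal (\<lambda>X Y. F X Y + G X Y)"
  by (rule causal_coeffwise[where H = "(+)" and h = "\<lambda>_. (+)"]) simp_all

lemma causal_diff: "causal F \<Longrightarrow> causal G \<Longrightarrow> causal (\<lambda>X Y. F X Y - G X Y :: 'a::group_add fps)"
  by (rule causal_coeffwise[where H = "(-)" and h = "\<lambda>_. (-)"]) simp_all

lemma causal_uminus: "causal F \<Longrightarrow> causal (\<lambda>X Y. - F X Y :: 'a::group_add fps)"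
  by (rule causal_coeffwise[where G = F and H = "\<lambda>A B. - A" and h = "\<lambda>_ a b. - a"]) simp_all

lemma causal_even_part: "causal F \<Longrightarrow> causal (\<lambda>X Y. fps_even_part (F X Y))"
  by (rule causal_coeffwise[where G = F and H = "\<lambda>A B. fps_even_part A"
        and h = "\<lambda>n a b. if even n then a else 0"]) (simp_all add: fps_even_part_def)

lemma causal_odd_part: "causal F \<Longrightarrow> causal (\<lambda>X Y. fps_odd_part (F X Y))"
  by (rule causal_coeffwise[where G = F and H = "\<lambda>A B. fps_odd_part A"
        and h = "\<lambda>n a b. if even n then 0 else a"]) (simp_all add: fps_odd_part_def)

lemma causal_mult:
  assumes "causal F" "causal G"
  shows "causal (\<lambda>X Y. F X Y * G X Y :: 'a::comm_semiring_0 fps)"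
proof (rule causalI)
  fix n and X Y X' Y' :: "'a fps"
  assume "\<And>k. k \<le> n \<Longrightarrow> X $ k = X' $ k \<and> Y $ k = Y' $ k"
  then have "F X Y $ i = F X' Y' $ i" "G X Y $ (n - i) = G X' Y' $ (n - i)" if "i \<le> n" for i
    using that by (auto intro!: causalD[OF assms(1)] causalD[OF assms(2)])
  then show "(F X Y * G X Y) $ n = (F X' Y' * G X' Y') $ n"
    unfolding fps_mult_nth by (intro sum.cong) auto
qed

lemmas causal_intros = causal_fst causal_snd causal_const causal_add causal_diff causal_uminus
  causal_even_part causal_odd_part causal_mult

text \<open>Uniqueness: the coefficients of two solutions agree by induction on the index, since
  \<open>X $ (n + 1)\<close> is determined by \<open>X' $ n\<close>.\<close>

lemma causal_ode_unique:
  fixes X1 Y1 X2 Y2 :: "'a::field_char_0 fps"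
  assumes F: "causal F" and G: "causal G"
    and sol1: "fps_deriv X1 = F X1 Y1" "fps_deriv Y1 = G X1 Y1"
    and sol2: "fps_deriv X2 = F X2 Y2" "fps_deriv Y2 = G X2 Y2"
    and init: "X1 $ 0 = X2 $ 0" "Y1 $ 0 = Y2 $ 0"
  shows "X1 = X2 \<and> Y1 = Y2"
proof -
  have "\<forall>k\<le>n. X1 $ k = X2 $ k \<and> Y1 $ k = Y2 $ k" for n
  proof (induction n)
    case 0
    then show ?case using init by simp
  next
    case (Suc n)
    then have "fps_deriv X1 $ n = fps_deriv X2 $ n" "fps_deriv Y1 $ n = fps_deriv Y2 $ n"
      unfolding sol1 sol2 by (auto intro!: causalD[OF F] causalD[OF G])
    then have "X1 $ Suc n = X2 $ Suc n" "Y1 $ Suc n = Y2 $ Suc n"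
      by (simp_all del: of_nat_Suc)
    with Suc show ?case by (auto simp: le_Suc_eq)
  qed
  then show ?thesis by (auto intro!: fps_ext)
qed

section \<open>The generating functions\<close>

lemma recurrences_imp_ode:
  fixes f e :: "nat \<Rightarrow> nat"
  assumes rec_f: "\<And>n. f (Suc n) = (\<Sum>j=0..n. if even j then (n choose j) * f j * f (n - j) else 0)
                                  + (if odd n then e n else 0)"
    and rec_e: "\<And>n. e (Suc n) = (\<Sum>j=0..n. if even j then (n choose j) * f j * e (n - j) else 0)
                                  + (if even n then f n else 0)"
  defines "F \<equiv> Abs_fps (\<lambda>n. real (f n) / fact n)" and "G \<equiv> Abs_fps (\<lambda>n. real (e n) / fact n)"
  shows "fps_deriv F = fps_even_part F * F + fps_odd_part G"
    and "fps_deriv G = fps_even_part F * (G + 1)"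
proof -
  have binomial: "real (n choose j) * x * y / fact n = (x / fact j) * (y / fact (n - j))"
    if "j \<le> n" for n j x y
    using that by (simp add: binomial_fact field_simps)
  show "fps_deriv F = fps_even_part F * F + fps_odd_part G"
  proof (rule fps_ext)
    fix n
    have "fps_deriv F $ n = real (f (Suc n)) / fact n"
      by (simp add: F_def fact_Suc field_simps del: of_nat_Suc)
    also have "\<dots> = (\<Sum>j=0..n. if even j then real (n choose j) * f j * f (n - j) / fact n else 0)
                     + (if odd n then real (e n) / fact n else 0)"
      by (subst rec_f) (auto simp: sum_divide_distrib add_divide_distrib of_nat_sum intro!: sum.cong)
    also have "\<dots> = (fps_even_part F * F + fps_odd_part G) $ n"
      by (auto simp: fps_mult_nth fps_even_part_def fps_odd_part_def F_def G_def binomial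
          intro!: sum.cong)
    finally show "fps_deriv F $ n = (fps_even_part F * F + fps_odd_part G) $ n" .
  qed
  show "fps_deriv G = fps_even_part F * (G + 1)"
  proof (rule fps_ext)
    fix n
    have "fps_deriv G $ n = real (e (Suc n)) / fact n"
      by (simp add: G_def fact_Suc field_simps del: of_nat_Suc)
    also have "\<dots> = (\<Sum>j=0..n. if even j then real (n choose j) * f j * e (n - j) / fact n else 0)
                     + (if even n then real (f n) / fact n else 0)"
      by (subst rec_e) (auto simp: sum_divide_distrib add_divide_distrib of_nat_sum intro!: sum.cong)
    also have "\<dots> = (fps_even_part F * G + fps_even_part F) $ n"
      by (auto simp: fps_mult_nth fps_even_part_def F_def G_def binomial intro!: sum.cong)
    finally show "fps_deriv G $ n = (fps_even_part F * (G + 1)) $ n"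
      by (simp add: algebra_simps)
  qed
qed

definition half :: "real fps" where "half = fps_const (1/2)"
definition rt3 :: "real fps" where "rt3 = fps_const (sqrt 3)"
definition sin2 :: "real fps" where "sin2 = fps_sin (1/2)"
definition cos2 :: "real fps" where "cos2 = fps_cos (1/2)"
definition sinh3 :: "real fps" where
  "sinh3 = (fps_exp (sqrt 3 / 2) - fps_exp (- (sqrt 3 / 2))) / 2"
definition cosh3 :: "real fps" where
  "cosh3 = (fps_exp (sqrt 3 / 2) + fps_exp (- (sqrt 3 / 2))) / 2"

lemma fps_divide_2: "(X :: real fps) / 2 = half * X"
proof -
  have "inverse (2 :: real fps) = half"
    by (simp add: inverse_fps_numeral half_def)
  then show ?thesis by (simp add: fps_divide_unit mult.commute)
qed

lemma two_half: "2 * half = 1" by (simp add: half_def numeral_fps_const)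
lemma two_half_mult: "2 * (half * X) = X" and half_two_mult: "half * (2 * X) = X"
  by (simp_all add: two_half mult.commute[of half] flip: mult.assoc)

lemma rt3_squared: "rt3 * rt3 = 3" by (simp add: rt3_def numeral_fps_const)

lemma sin2_cos2: "cos2 * cos2 + sin2 * sin2 = 1"
  using fps_sin_cos_sum_of_squares[of "1/2::real"] by (simp add: sin2_def cos2_def power2_eq_square)

lemma cosh3_sinh3: "cosh3 * cosh3 - sinh3 * sinh3 = 1"
proof -
  have "cosh3 * cosh3 - sinh3 * sinh3
        = (2 * half) * (2 * half) * (fps_exp (sqrt 3 / 2) * fps_exp (- (sqrt 3 / 2)))"
    unfolding cosh3_def sinh3_def fps_divide_2 by algebra
  then show ?thesis by (simp add: two_half flip: fps_exp_add_mult)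
qed

lemma sinh3_exp: "sinh3 = half * (fps_exp (sqrt 3 / 2) - fps_exp (- (sqrt 3 / 2)))"
  by (simp add: sinh3_def fps_divide_2)

lemma cosh3_exp: "cosh3 = half * (fps_exp (sqrt 3 / 2) + fps_exp (- (sqrt 3 / 2)))"
  by (simp add: cosh3_def fps_divide_2)

lemma deriv_sin2: "fps_deriv sin2 = half * cos2"
  by (simp add: sin2_def cos2_def half_def fps_sin_deriv)

lemma deriv_cos2: "fps_deriv cos2 = - (half * sin2)"
  by (simp add: sin2_def cos2_def half_def fps_cos_deriv flip: fps_const_neg)

lemma deriv_sinh3: "fps_deriv sinh3 = rt3 * half * cosh3"
  unfolding sinh3_exp cosh3_exp half_def rt3_def
  by (rule fps_ext) (simp add: field_simps)

lemma deriv_cosh3: "fps_deriv cosh3 = rt3 * half * sinh3"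
  unfolding sinh3_exp cosh3_exp half_def rt3_def
  by (rule fps_ext) (simp add: field_simps)

lemma reflect_sin2: "fps_reflect sin2 = - sin2"
  by (simp add: sin2_def fps_reflect_sin)

lemma reflect_cos2: "fps_reflect cos2 = cos2"
  by (simp add: cos2_def fps_reflect_cos)

lemma reflect_sinh3: "fps_reflect sinh3 = - sinh3"
  unfolding sinh3_exp half_def
  by (simp add: fps_reflect_mult fps_reflect_const fps_reflect_diff fps_reflect_exp algebra_simps)

lemma reflect_cosh3: "fps_reflect cosh3 = cosh3"
  unfolding cosh3_exp half_def
  by (simp add: fps_reflect_mult fps_reflect_const fps_reflect_add fps_reflect_exp algebra_simps)

lemma sin2_cos2_nth_0: "sin2 $ 0 = 0" "cos2 $ 0 = 1" "sinh3 $ 0 = 0" "cosh3 $ 0 = 1"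
  by (simp_all add: sin2_def cos2_def sinh3_exp cosh3_exp half_def)

definition numer :: "real fps" where "numer = 3 * sin2 + 3 * cosh3"
definition denom :: "real fps" where "denom = 3 * cos2 - rt3 * sinh3"

lemma numer_nth_0: "numer $ 0 = 3" and denom_nth_0: "denom $ 0 = 3"
  by (simp_all add: numer_def denom_def sin2_cos2_nth_0)

lemma reflect_numer: "fps_reflect numer = 3 * cosh3 - 3 * sin2"
  by (simp add: numer_def fps_reflect_add fps_reflect_mult fps_reflect_numeral reflect_sin2
      reflect_cosh3)

lemma reflect_denom: "fps_reflect denom = 3 * cos2 + rt3 * sinh3"
  by (simp add: denom_def rt3_def fps_reflect_diff fps_reflect_mult fps_reflect_numeral
      fps_reflect_const reflect_cos2 reflect_sinh3)

lemma deriv_numer: "fps_deriv numer = half * (3 * cos2 + 3 * rt3 * sinh3)"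
  by (simp add: numer_def deriv_sin2 deriv_cosh3 algebra_simps)

lemma deriv_denom: "fps_deriv denom = - (half * numer)"
proof -
  have "fps_deriv denom = - (3 * half * sin2) - (rt3 * rt3) * half * cosh3"
    by (simp add: denom_def deriv_cos2 deriv_sinh3 rt3_def algebra_simps)
  also have "\<dots> = - (half * numer)"
    unfolding rt3_squared numer_def by (simp add: algebra_simps)
  finally show ?thesis .
qed

lemma reflect_denom_sinh3: "2 * rt3 * sinh3 + denom = fps_reflect denom"
  unfolding reflect_denom by (simp add: denom_def algebra_simps)

text \<open>The two trigonometric identities behind the differential equations of the closed form.\<close>

lemma closed_form_identity_A:
  "(3 * cos2 + 3 * rt3 * sinh3) * fps_reflect denom
     = fps_reflect numer * numer + 2 * rt3 * sinh3 * (fps_reflect denom + denom)"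
proof -
  have "(3 * cos2 + 3 * rt3 * sinh3) * fps_reflect denom
          - (fps_reflect numer * numer + 2 * rt3 * sinh3 * (fps_reflect denom + denom))
        = 9 * (cos2 * cos2 + sin2 * sin2) - 9 * (cosh3 * cosh3 - sinh3 * sinh3)
          + 3 * sinh3 * sinh3 * (rt3 * rt3 - 3)"
    unfolding reflect_numer reflect_denom unfolding numer_def denom_def by algebra
  then show ?thesis by (simp add: sin2_cos2 cosh3_sinh3 rt3_squared)
qed

lemma closed_form_identity_G:
  "2 * rt3 * (rt3 * cosh3 * denom + numer * sinh3)
     = numer * fps_reflect denom + fps_reflect numer * denom"
proof -
  have "2 * rt3 * (rt3 * cosh3 * denom + numer * sinh3)
          - (numer * fps_reflect denom + fps_reflect numer * denom)
        = (6 * cos2 * cosh3 - 2 * rt3 * cosh3 * sinh3) * (rt3 * rt3 - 3)"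
    unfolding reflect_numer reflect_denom unfolding numer_def denom_def by algebra
  then show ?thesis by (simp add: rt3_squared)
qed

lemma fps_deriv_quotient_cleared:
  fixes a N W :: "'a::comm_ring_1 fps"
  assumes "a * W = N"
  shows "fps_deriv a * W * W = fps_deriv N * W - N * fps_deriv W"
proof -
  have product_rule: "fps_deriv a * W = fps_deriv N - a * fps_deriv W"
    using arg_cong[OF assms, of fps_deriv] by (simp add: algebra_simps)
  have "fps_deriv a * W * W = (fps_deriv N - a * fps_deriv W) * W"
    by (simp add: product_rule)
  also have "\<dots> = fps_deriv N * W - (a * W) * fps_deriv W"
    by (simp add: algebra_simps)
  finally show ?thesis by (simp add: assms)
qed

lemma fps_unit_mult_right_cancel:
  fixes D X Y :: "'a::idom fps"
  assumes "D $ 0 \<noteq> 0" "X * D = Y * D"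
  shows "X = Y"
proof -
  have "D \<noteq> 0" using assms(1) by auto
  then show ?thesis using assms(2) by simp
qed

definition A_closed :: "real fps" where "A_closed = numer / denom"
definition G_closed :: "real fps" where "G_closed = 2 * rt3 * sinh3 / denom"

lemma fps_divide_mult_cancel: "(W :: 'a::field fps) $ 0 \<noteq> 0 \<Longrightarrow> (N / W) * W = N"
  by (simp add: fps_divide_unit inverse_mult_eq_1 mult.assoc)

lemma A_closed_denom: "A_closed * denom = numer"
  unfolding A_closed_def by (rule fps_divide_mult_cancel) (simp add: denom_nth_0)

lemma G_closed_denom: "G_closed * denom = 2 * rt3 * sinh3"
  unfolding G_closed_def by (rule fps_divide_mult_cancel) (simp add: denom_nth_0)

lemma A_closed_nth_0: "A_closed $ 0 = 1" and G_closed_nth_0: "G_closed $ 0 = 0"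
  by (simp_all add: A_closed_def G_closed_def fps_divide_unit numer_nth_0 denom_nth_0
      sin2_cos2_nth_0)

lemma reflect_A_closed_denom: "fps_reflect A_closed * fps_reflect denom = fps_reflect numer"
  using arg_cong[OF A_closed_denom, of fps_reflect] by (simp add: fps_reflect_mult)

lemma reflect_G_closed_denom: "fps_reflect G_closed * fps_reflect denom = - (2 * rt3 * sinh3)"
  using arg_cong[OF G_closed_denom, of fps_reflect]
  by (simp add: fps_reflect_mult fps_reflect_numeral rt3_def fps_reflect_const reflect_sinh3)

lemma denom_product_nth_0: "(denom * denom * fps_reflect denom) $ 0 \<noteq> 0"
  by (simp add: reflect_denom denom_nth_0 rt3_def sin2_cos2_nth_0 fps_mult_nth_0)

lemma A_closed_ode:
  "fps_deriv A_closed = fps_even_part A_closed * A_closed + fps_odd_part G_closed"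
proof -
  let ?W = denom and ?RW = "fps_reflect denom" and ?N = numer and ?RN = "fps_reflect numer"
  let ?A = A_closed and ?RA = "fps_reflect A_closed"
  let ?G = G_closed and ?RG = "fps_reflect G_closed"
  have "fps_deriv ?A * (?W * ?W * ?RW) = (fps_deriv ?N * ?W - ?N * fps_deriv ?W) * ?RW"
    using fps_deriv_quotient_cleared[OF A_closed_denom] by (simp add: mult.assoc)
  also have "\<dots> = half * (?W * ((3 * cos2 + 3 * rt3 * sinh3) * ?RW) + ?N * ?N * ?RW)"
    by (simp add: deriv_numer deriv_denom algebra_simps)
  also have "\<dots> = half * (?N * ?N * ?RW + ?RN * ?N * ?W
                    + 2 * rt3 * sinh3 * ?W * ?RW + 2 * rt3 * sinh3 * ?W * ?W)"
    unfolding closed_form_identity_A by (simp add: algebra_simps)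
  also have "\<dots> = half * ((?A * ?W) * (?A * ?W) * ?RW + (?RA * ?RW) * (?A * ?W) * ?W
                    + (?G * ?W) * ?W * ?RW - (?RG * ?RW) * ?W * ?W)"
    by (simp add: A_closed_denom reflect_A_closed_denom G_closed_denom reflect_G_closed_denom)
  also have "\<dots> = (half * (?A + ?RA) * ?A + half * (?G - ?RG)) * (?W * ?W * ?RW)"
    by (simp add: algebra_simps)
  finally have "fps_deriv ?A = half * (?A + ?RA) * ?A + half * (?G - ?RG)"
    by (rule fps_unit_mult_right_cancel[OF denom_product_nth_0])
  then show ?thesis
    by (simp add: fps_even_part_reflect fps_odd_part_reflect half_def)
qed

lemma G_closed_ode: "fps_deriv G_closed = fps_even_part A_closed * (G_closed + 1)"
proof -
  let ?W = denom and ?RW = "fps_reflect denom" and ?N = numer and ?RN = "fps_reflect numer"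
  let ?A = A_closed and ?RA = "fps_reflect A_closed" and ?G = G_closed
  have "fps_deriv ?G * (?W * ?W * ?RW)
        = (fps_deriv (2 * rt3 * sinh3) * ?W - 2 * rt3 * sinh3 * fps_deriv ?W) * ?RW"
    using fps_deriv_quotient_cleared[OF G_closed_denom] by (simp add: mult.assoc)
  also have "\<dots> = half * ?RW * (2 * rt3 * (rt3 * cosh3 * ?W + ?N * sinh3))"
    by (simp add: deriv_sinh3 deriv_denom rt3_def algebra_simps)
  also have "\<dots> = half * (?N * ?RW + ?RN * ?W) * ?RW"
    unfolding closed_form_identity_G by (simp add: ac_simps)
  also have "\<dots> = half * ((?A * ?W) * ?RW + (?RA * ?RW) * ?W) * (?G * ?W + ?W)"
    by (simp add: A_closed_denom reflect_A_closed_denom G_closed_denom reflect_denom_sinh3)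
  also have "\<dots> = (half * (?A + ?RA) * (?G + 1)) * (?W * ?W * ?RW)"
    by (simp add: algebra_simps)
  finally have "fps_deriv ?G = half * (?A + ?RA) * (?G + 1)"
    by (rule fps_unit_mult_right_cancel[OF denom_product_nth_0])
  then show ?thesis
    by (simp add: fps_even_part_reflect half_def)
qed

definition sec_tan :: "real fps" where "sec_tan = inverse (fps_cos 1) + fps_tan 1"

lemma sec_tan_nth_0: "sec_tan $ 0 = 1"
  by (simp add: sec_tan_def fps_tan_def fps_divide_unit)

lemma sec_tan_ode: "2 * fps_deriv sec_tan = 1 + sec_tan * sec_tan"
proof -
  define c s i where "c = fps_cos (1::real)" and "s = fps_sin (1::real)" and "i = inverse c"
  have c0: "c $ 0 \<noteq> 0" by (simp add: c_def)
  have ci: "c * i = 1" unfolding i_def using c0 by (simp add: inverse_mult_eq_1')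
  have pythagoras: "c * c + s * s = 1"
    using fps_sin_cos_sum_of_squares[of "1::real"] by (simp add: s_def c_def power2_eq_square)
  have T: "sec_tan = i + s * i"
    by (simp add: sec_tan_def fps_tan_def i_def c_def s_def fps_divide_unit)
  have di: "fps_deriv i = s * i * i"
    unfolding i_def using fps_inverse_deriv[OF c0]
    by (simp add: c_def s_def fps_cos_deriv power2_eq_square flip: fps_const_neg)
  have ds: "fps_deriv s = c" by (simp add: s_def c_def fps_sin_deriv)
  have "2 * fps_deriv sec_tan - (1 + sec_tan * sec_tan)
        = 2 * (c * i - 1) - (c * i - 1) * (c * i + 1) + (c * c + s * s - 1) * (i * i)"
    unfolding T by (simp add: di ds algebra_simps)
  then show ?thesis by (simp add: ci pythagoras)
qed

text \<open>For a complex \<open>z\<close>, the real and imaginary parts of the series \<open>T(z x)\<close>.\<close>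

definition twist_re :: "complex \<Rightarrow> real fps \<Rightarrow> real fps" where
  "twist_re z T = Abs_fps (\<lambda>n. Re (z ^ n) * T $ n)"

definition twist_im :: "complex \<Rightarrow> real fps \<Rightarrow> real fps" where
  "twist_im z T = Abs_fps (\<lambda>n. Im (z ^ n) * T $ n)"

lemma twist_add:
  "twist_re z (T + U) = twist_re z T + twist_re z U"
  "twist_im z (T + U) = twist_im z T + twist_im z U"
  by (auto intro!: fps_ext simp: twist_re_def twist_im_def algebra_simps)

lemma twist_one: "twist_re z 1 = 1" "twist_im z 1 = 0"
  by (auto intro!: fps_ext simp: twist_re_def twist_im_def)

lemma twist_const_mult:
  "twist_re z (fps_const c * T) = fps_const c * twist_re z T"
  "twist_im z (fps_const c * T) = fps_const c * twist_im z T"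
  by (auto intro!: fps_ext simp: twist_re_def twist_im_def)

lemma twist_mult:
  "twist_re z (T * U) = twist_re z T * twist_re z U - twist_im z T * twist_im z U"
  "twist_im z (T * U) = twist_re z T * twist_im z U + twist_im z T * twist_re z U"
proof -
  have split: "z ^ n = z ^ i * z ^ (n - i)" if "i \<le> n" for i n
    using that by (simp flip: power_add)
  show "twist_re z (T * U) = twist_re z T * twist_re z U - twist_im z T * twist_im z U"
    by (rule fps_ext) (simp add: twist_re_def twist_im_def fps_mult_nth sum_distrib_left
        flip: sum_subtractf, intro sum.cong, auto simp: split algebra_simps)
  show "twist_im z (T * U) = twist_re z T * twist_im z U + twist_im z T * twist_re z U"
    by (rule fps_ext) (simp add: twist_re_def twist_im_def fps_mult_nth sum_distrib_left
        flip: sum.distrib, intro sum.cong, auto simp: split algebra_simps)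
qed

lemma twist_deriv:
  "fps_deriv (twist_re z T)
     = fps_const (Re z) * twist_re z (fps_deriv T) - fps_const (Im z) * twist_im z (fps_deriv T)"
  "fps_deriv (twist_im z T)
     = fps_const (Im z) * twist_re z (fps_deriv T) + fps_const (Re z) * twist_im z (fps_deriv T)"
  by (auto intro!: fps_ext simp: twist_re_def twist_im_def algebra_simps)

definition omega :: complex where "omega = Complex (-1/2) (sqrt 3 / 2)"

lemma omega_cube: "omega ^ 3 = 1"
proof -
  have "omega * omega = Complex (-1/2) (- (sqrt 3 / 2))"
    by (simp add: omega_def field_simps complex_eq_iff)
  then have "omega ^ 3 = Complex (-1/2) (- (sqrt 3 / 2)) * omega" by (simp add: power3_eq_cube)
  also have "\<dots> = 1" by (simp add: omega_def field_simps complex_eq_iff)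
  finally show ?thesis .
qed

lemma omega_power_mod: "omega ^ k = omega ^ (k mod 3)"
proof -
  have "omega ^ k = omega ^ (k mod 3) * (omega ^ 3) ^ (k div 3)"
    by (metis power_add power_mult mod_mult_div_eq)
  then show ?thesis by (simp add: omega_cube)
qed

text \<open>Writing \<open>T(\<omega> x) = P + i Q\<close>, the equation \<open>2 T' = 1 + T\<^sup>2\<close> becomes
  \<open>2 P' + 2 i Q' = \<omega> (1 + P\<^sup>2 - Q\<^sup>2 + 2 i P Q)\<close>, i.e. the following real system.\<close>

definition riccati_re :: "real fps \<Rightarrow> real fps \<Rightarrow> real fps" where
  "riccati_re P Q = half * (- (half * (1 + P * P - Q * Q)) - rt3 * (P * Q))"

definition riccati_im :: "real fps \<Rightarrow> real fps \<Rightarrow> real fps" where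
  "riccati_im P Q = half * (rt3 * half * (1 + P * P - Q * Q) - P * Q)"

lemma causal_riccati: "causal riccati_re" "causal riccati_im"
  unfolding riccati_re_def riccati_im_def by (intro causal_intros)+

lemma twisted_sec_tan_ode:
  defines "P \<equiv> twist_re omega sec_tan" and "Q \<equiv> twist_im omega sec_tan"
  shows "fps_deriv P = riccati_re P Q" "fps_deriv Q = riccati_im P Q"
proof -
  have "fps_deriv sec_tan = half * (2 * fps_deriv sec_tan)"
    by (rule half_two_mult[symmetric])
  then have deriv: "fps_deriv sec_tan = half * (1 + sec_tan * sec_tan)"
    by (simp add: sec_tan_ode)
  have re: "twist_re omega (fps_deriv sec_tan) = half * (1 + P * P - Q * Q)"
    and im: "twist_im omega (fps_deriv sec_tan) = half * (P * Q + Q * P)"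
    unfolding deriv half_def twist_const_mult
    unfolding twist_add twist_mult twist_one P_def Q_def by simp_all
  have omega_parts: "fps_const (Re omega) = - half" "fps_const (Im omega) = rt3 * half"
    by (simp_all add: omega_def half_def rt3_def)
  show "fps_deriv P = riccati_re P Q"
    unfolding P_def twist_deriv omega_parts re im riccati_re_def
    unfolding P_def[symmetric] Q_def[symmetric] using two_half by algebra
  show "fps_deriv Q = riccati_im P Q"
    unfolding Q_def twist_deriv omega_parts re im riccati_im_def
    unfolding P_def[symmetric] Q_def[symmetric] using two_half by algebra
qed

definition P_closed :: "real fps" where "P_closed = 3 * cos2 / numer"
definition Q_closed :: "real fps" where "Q_closed = 3 * sinh3 / numer"

lemma P_closed_numer: "P_closed * numer = 3 * cos2"
  and Q_closed_numer: "Q_closed * numer = 3 * sinh3"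
  unfolding P_closed_def Q_closed_def by (simp_all add: fps_divide_mult_cancel numer_nth_0)

lemma numer_squared_nth_0: "(numer * numer) $ 0 \<noteq> 0"
  by (simp add: numer_nth_0 fps_mult_nth_0)

lemma pythagoras_zero: "sin2 * sin2 + cos2 * cos2 - 1 = 0" "cosh3 * cosh3 - sinh3 * sinh3 - 1 = 0"
  "1 - 2 * half = 0"
  using sin2_cos2 cosh3_sinh3 two_half by (simp_all add: algebra_simps)

lemma cancel_twice_numer_squared: "2 * X * (numer * numer) = 2 * Y * (numer * numer) \<Longrightarrow> X = Y"
  using fps_unit_mult_right_cancel[OF numer_squared_nth_0]
  by (metis mult.assoc mult_cancel_left zero_neq_numeral)

lemma P_closed_ode: "fps_deriv P_closed = riccati_re P_closed Q_closed"
proof -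
  have "2 * fps_deriv P_closed * (numer * numer) = 2 * (fps_deriv (3 * cos2) * numer - 3 * cos2 * fps_deriv numer)"
    using fps_deriv_quotient_cleared[OF P_closed_numer] by (simp add: mult.assoc)
  also have "\<dots> = - 6 * half * sin2 * numer - 6 * half * cos2 * (3 * cos2 + 3 * rt3 * sinh3)"
    by (simp add: deriv_cos2 deriv_numer algebra_simps)
  also have "\<dots> = (- (half * (numer * numer + (P_closed * numer) * (P_closed * numer)
                        - (Q_closed * numer) * (Q_closed * numer)))
                   - rt3 * ((P_closed * numer) * (Q_closed * numer)))
                  - 9 * half * (sin2 * sin2 + cos2 * cos2 - 1)
                  + 9 * half * (cosh3 * cosh3 - sinh3 * sinh3 - 1)
                  + 9 * rt3 * cos2 * sinh3 * (1 - 2 * half)"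
    unfolding P_closed_numer Q_closed_numer unfolding numer_def by algebra
  also have "\<dots> = (- (half * (numer * numer + (P_closed * numer) * (P_closed * numer)
                        - (Q_closed * numer) * (Q_closed * numer)))
                   - rt3 * ((P_closed * numer) * (Q_closed * numer)))"
    unfolding pythagoras_zero by simp
  also have "\<dots> = (2 * riccati_re P_closed Q_closed) * (numer * numer)"
    unfolding riccati_re_def two_half_mult by (simp add: algebra_simps)
  finally show ?thesis
    by (rule cancel_twice_numer_squared)
qed

lemma Q_closed_ode: "fps_deriv Q_closed = riccati_im P_closed Q_closed"
proof -
  have "2 * fps_deriv Q_closed * (numer * numer) = 2 * (fps_deriv (3 * sinh3) * numer - 3 * sinh3 * fps_deriv numer)"
    using fps_deriv_quotient_cleared[OF Q_closed_numer] by (simp add: mult.assoc)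
  also have "\<dots> = 6 * rt3 * half * cosh3 * numer - 6 * half * sinh3 * (3 * cos2 + 3 * rt3 * sinh3)"
    by (simp add: deriv_sinh3 deriv_numer algebra_simps)
  also have "\<dots> = (rt3 * half * (numer * numer + (P_closed * numer) * (P_closed * numer)
                        - (Q_closed * numer) * (Q_closed * numer))
                   - (P_closed * numer) * (Q_closed * numer))
                  + 9 * rt3 * half * (cosh3 * cosh3 - sinh3 * sinh3 - 1)
                  - 9 * rt3 * half * (sin2 * sin2 + cos2 * cos2 - 1)
                  + 9 * cos2 * sinh3 * (1 - 2 * half)"
    unfolding P_closed_numer Q_closed_numer unfolding numer_def by algebra
  also have "\<dots> = (rt3 * half * (numer * numer + (P_closed * numer) * (P_closed * numer)
                        - (Q_closed * numer) * (Q_closed * numer))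
                   - (P_closed * numer) * (Q_closed * numer))"
    unfolding pythagoras_zero by simp
  also have "\<dots> = (2 * riccati_im P_closed Q_closed) * (numer * numer)"
    unfolding riccati_im_def two_half_mult by (simp add: algebra_simps)
  finally show ?thesis
    by (rule cancel_twice_numer_squared)
qed

text \<open>The differential system of the generating functions is causal, so the closed form is the
  unique solution with the right constant terms.\<close>

lemma egf_closed_form:
  fixes f e :: "nat \<Rightarrow> nat"
  assumes rec_f: "\<And>n. f (Suc n) = (\<Sum>j=0..n. if even j then (n choose j) * f j * f (n - j) else 0)
                                  + (if odd n then e n else 0)"
    and rec_e: "\<And>n. e (Suc n) = (\<Sum>j=0..n. if even j then (n choose j) * f j * e (n - j) else 0)
                                  + (if even n then f n else 0)"
    and "f 0 = 1" "e 0 = 0"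
  shows "Abs_fps (\<lambda>n. real (f n) / fact n) = A_closed"
proof -
  have "causal (\<lambda>X Y. fps_even_part X * X + fps_odd_part Y :: real fps)"
    and "causal (\<lambda>X Y. fps_even_part X * (Y + 1) :: real fps)"
    by (intro causal_intros)+
  from causal_ode_unique[OF this recurrences_imp_ode[OF rec_f rec_e] A_closed_ode G_closed_ode] assms(3,4)
  show ?thesis by (simp add: A_closed_nth_0 G_closed_nth_0)
qed

lemma twisted_sec_tan_closed_form:
  "twist_re omega sec_tan = P_closed" "twist_im omega sec_tan = Q_closed"
proof -
  have "twist_re omega sec_tan $ 0 = P_closed $ 0" "twist_im omega sec_tan $ 0 = Q_closed $ 0"
    by (simp_all add: twist_re_def twist_im_def sec_tan_nth_0 P_closed_def Q_closed_def
        fps_divide_unit numer_nth_0 sin2_cos2_nth_0)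
  from causal_ode_unique[OF causal_riccati twisted_sec_tan_ode P_closed_ode Q_closed_ode this]
  show "twist_re omega sec_tan = P_closed" "twist_im omega sec_tan = Q_closed" by simp_all
qed

text \<open>Since \<open>\<omega>\<^sup>k\<close> is \<open>1\<close>, \<open>\<omega>\<close> or \<open>\<omega>\<^sup>2\<close> according to \<open>k mod 3\<close>, the coefficients of
  \<open>P - Q/\<surd>3\<close> are \<open>E\<^sub>k/k!\<close>, \<open>-E\<^sub>k/k!\<close> or \<open>0\<close>.\<close>

lemma alternating_euler_series:
  "Abs_fps (\<lambda>k. if k mod 3 = 0 then euler_number k / fact k
                 else if k mod 3 = 1 then - (euler_number k / fact k) else 0) = denom / numer"
proof -
  have "Abs_fps (\<lambda>k. if k mod 3 = 0 then euler_number k / fact k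
                 else if k mod 3 = 1 then - (euler_number k / fact k) else 0)
        = twist_re omega sec_tan - fps_const (1 / sqrt 3) * twist_im omega sec_tan"
  proof (rule fps_ext)
    fix k
    have E: "euler_number k / fact k = sec_tan $ k" by (simp add: euler_number_def sec_tan_def)
    have "k mod 3 = 0 \<or> k mod 3 = 1 \<or> k mod 3 = 2" by auto
    moreover have "omega ^ 2 = Complex (-1/2) (- (sqrt 3 / 2))"
      by (simp add: omega_def power2_eq_square field_simps complex_eq_iff)
    ultimately show "Abs_fps (\<lambda>k. if k mod 3 = 0 then euler_number k / fact k
                 else if k mod 3 = 1 then - (euler_number k / fact k) else 0) $ k
        = (twist_re omega sec_tan - fps_const (1 / sqrt 3) * twist_im omega sec_tan) $ k"
      using omega_power_mod[of k] by (auto simp: E twist_re_def twist_im_def omega_def field_simps)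
  qed
  also have "\<dots> = (3 * cos2 - fps_const (1 / sqrt 3) * 3 * sinh3) * inverse numer"
    by (simp add: twisted_sec_tan_closed_form P_closed_def Q_closed_def fps_divide_unit numer_nth_0
        algebra_simps)
  also have "\<dots> = denom / numer"
    by (simp add: denom_def rt3_def fps_divide_unit numer_nth_0 numeral_fps_const real_div_sqrt)
  finally show ?thesis .
qed

lemma A_closed_inverse: "A_closed = inverse (denom / numer)"
  using numer_nth_0 denom_nth_0
  by (simp add: A_closed_def fps_divide_unit fps_inverse_mult fps_inverse_idempotent mult.commute)

theorem mainTheorem5:
  shows "Abs_fps (\<lambda>n. real (f_count n) / fact n) =
           inverse (Abs_fps (\<lambda>k. if k mod 3 = 0 then euler_number k / fact k
                                 else if k mod 3 = 1 then - (euler_number k / fact k)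
                                 else 0))
       \<and> Abs_fps (\<lambda>n. real (f_count n) / fact n) =
           (3 * fps_sin (1/2) + 3 * ((fps_exp (sqrt 3 / 2) + fps_exp (- (sqrt 3 / 2))) / 2)) /
           (3 * fps_cos (1/2) - fps_const (sqrt 3) * ((fps_exp (sqrt 3 / 2) - fps_exp (- (sqrt 3 / 2))) / 2))"
proof -
  have egf: "Abs_fps (\<lambda>n. real (f_count n) / fact n) = A_closed"
    by (rule egf_closed_form[OF f_count_rec e_count_rec f_count_0 e_count_0])
  have "A_closed = (3 * fps_sin (1/2) + 3 * ((fps_exp (sqrt 3 / 2) + fps_exp (- (sqrt 3 / 2))) / 2)) /
           (3 * fps_cos (1/2) - fps_const (sqrt 3) * ((fps_exp (sqrt 3 / 2) - fps_exp (- (sqrt 3 / 2))) / 2))"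
    by (simp add: A_closed_def numer_def denom_def sin2_def cos2_def sinh3_def cosh3_def rt3_def)
  then show ?thesis
    using egf A_closed_inverse alternating_euler_series by simp
qed

end
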